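(* Let $f=(f_1,f_2):\mathbb{R}^2\to\mathbb{R}^2$ be a smooth one-generic mapping having a cusp point at the origin with $f(\mathbf{0})=\mathbf{0}$, and suppose that $\frac{\partial f_1}{\partial x}(\mathbf{0})=\frac{\partial f_2}{\partial x}(\mathbf{0})=\frac{\partial f_2}{\partial y}(\mathbf{0})=0$, $\frac{\partial f_1}{\partial y}(\mathbf{0})\ne0$, $\frac{\partial J}{\partial x}(\mathbf{0})=0$, $\frac{\partial J}{\partial y}(\mathbf{0})\ne0$. Let $\varphi:(\mathbb{R},0)\to(\mathbb{R},0)$ be the smooth germ with $J(t,\varphi(t))\equiv0$, and set $$v_1=\frac{d^2}{dt^2}\begin{bmatrix}f_1(t,\varphi(t))\\ f_2(t,\varphi(t))\end{bmatrix}\Big|_{t=0},\qquad v_2=Df(\mathbf{0})\cdot\begin{bmatrix}\frac{\partial J}{\partial x}(\mathbf{0})\\ \frac{\partial J}{\partial y}(\mathbf{0})\end{bmatrix}.$$ Then (i) $\det DF(\mathbf{0})\ne0$; (ii) the (nonzero) vectors $v_1$ and $v_2$ point in the same direction if and only if $\det DF(\mathbf{0})<0$, and in opposite directions if and only if $\det DF(\mathbf{0})>0$.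
   Context: $J=\det Df$ and $F=Df\cdot(-\partial J/\partial y,\ \partial J/\partial x)^T$. $f$ is one-generic if $dJ\ne0$ on $J^{-1}(0)$ (equivalently, $j^1f$ is transverse to the corank strata). A point $p\in S_1(f)=J^{-1}(0)$ with $T_pS_1(f)=\ker Df(p)$ is a cusp point if it is a simple zero of $dJ(\xi)$ on $S_1(f)$, $\xi$ a nonvanishing vector field along $S_1(f)$ in $\ker Df$. *)

theory Defs
  imports "HOL-Analysis.Analysis"
begin

definition px :: "(real \<Rightarrow> real \<Rightarrow> real) \<Rightarrow> real \<Rightarrow> real \<Rightarrow> real" where
  "px g x y = deriv (\<lambda>s. g s y) x"

definition py :: "(real \<Rightarrow> real \<Rightarrow> real) \<Rightarrow> real \<Rightarrow> real \<Rightarrow> real" where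
  "py g x y = deriv (\<lambda>s. g x s) y"

coinductive smooth2 :: "(real \<Rightarrow> real \<Rightarrow> real) \<Rightarrow> bool" where
  "\<lbrakk>\<forall>x y. ((\<lambda>p. g (fst p) (snd p)) has_derivative
            (\<lambda>h. px g x y * fst h + py g x y * snd h)) (at (x, y));
    smooth2 (px g); smooth2 (py g)\<rbrakk> \<Longrightarrow> smooth2 g"

coinductive smooth1_on :: "real set \<Rightarrow> (real \<Rightarrow> real) \<Rightarrow> bool" where
  "\<lbrakk>\<forall>t\<in>S. (g has_real_derivative deriv g t) (at t);
    smooth1_on S (deriv g)\<rbrakk> \<Longrightarrow> smooth1_on S g"

definition jac :: "(real \<Rightarrow> real \<Rightarrow> real) \<Rightarrow> (real \<Rightarrow> real \<Rightarrow> real) \<Rightarrow> real \<Rightarrow> real \<Rightarrow> real" where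
  "jac f1 f2 x y = px f1 x y * py f2 x y - py f1 x y * px f2 x y"

text \<open>F = Df . (-dJ/dy, dJ/dx)^T, componentwise.\<close>

definition bigF1 :: "(real \<Rightarrow> real \<Rightarrow> real) \<Rightarrow> (real \<Rightarrow> real \<Rightarrow> real) \<Rightarrow> real \<Rightarrow> real \<Rightarrow> real" where
  "bigF1 f1 f2 x y = px f1 x y * (- py (jac f1 f2) x y) + py f1 x y * px (jac f1 f2) x y"

definition bigF2 :: "(real \<Rightarrow> real \<Rightarrow> real) \<Rightarrow> (real \<Rightarrow> real \<Rightarrow> real) \<Rightarrow> real \<Rightarrow> real \<Rightarrow> real" where
  "bigF2 f1 f2 x y = px f2 x y * (- py (jac f1 f2) x y) + py f2 x y * px (jac f1 f2) x y"

definition detDF :: "(real \<Rightarrow> real \<Rightarrow> real) \<Rightarrow> (real \<Rightarrow> real \<Rightarrow> real) \<Rightarrow> real \<Rightarrow> real \<Rightarrow> real" where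
  "detDF f1 f2 x y = px (bigF1 f1 f2) x y * py (bigF2 f1 f2) x y
                   - py (bigF1 f1 f2) x y * px (bigF2 f1 f2) x y"

definition one_generic :: "(real \<Rightarrow> real \<Rightarrow> real) \<Rightarrow> (real \<Rightarrow> real \<Rightarrow> real) \<Rightarrow> bool" where
  "one_generic f1 f2 \<longleftrightarrow>
     (\<forall>x y. jac f1 f2 x y = 0 \<longrightarrow> (px (jac f1 f2) x y, py (jac f1 f2) x y) \<noteq> (0, 0))"

text \<open>Cusp point (a, b): (a,b) lies on S_1(f) = J^{-1}(0); near (a,b) the curve S_1(f) is
parametrised by a smooth regular curve gamma = (g1, g2) with gamma(0) = (a, b); the tangent
T_p S_1(f) (spanned by gamma'(0)) lies in ker Df(p); and for a smooth nonvanishing field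
xi = (k1, k2) along S_1(f) with xi in ker Df, the function dJ(xi) restricted to S_1(f)
(i.e. along gamma) has a simple zero at (a, b).\<close>

definition cusp_point :: "(real \<Rightarrow> real \<Rightarrow> real) \<Rightarrow> (real \<Rightarrow> real \<Rightarrow> real) \<Rightarrow> real \<Rightarrow> real \<Rightarrow> bool" where
  "cusp_point f1 f2 a b \<longleftrightarrow>
     jac f1 f2 a b = 0 \<and>
     (\<exists>e>0. \<exists>g1 g2 k1 k2 :: real \<Rightarrow> real.
        smooth1_on (ball 0 e) g1 \<and> smooth1_on (ball 0 e) g2 \<and>
        smooth1_on (ball 0 e) k1 \<and> smooth1_on (ball 0 e) k2 \<and>
        g1 0 = a \<and> g2 0 = b \<and> (deriv g1 0, deriv g2 0) \<noteq> (0, 0) \<and>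
        (\<forall>t\<in>ball 0 e. jac f1 f2 (g1 t) (g2 t) = 0) \<and>
        px f1 a b * deriv g1 0 + py f1 a b * deriv g2 0 = 0 \<and>
        px f2 a b * deriv g1 0 + py f2 a b * deriv g2 0 = 0 \<and>
        (\<forall>t\<in>ball 0 e. (k1 t, k2 t) \<noteq> (0, 0) \<and>
           px f1 (g1 t) (g2 t) * k1 t + py f1 (g1 t) (g2 t) * k2 t = 0 \<and>
           px f2 (g1 t) (g2 t) * k1 t + py f2 (g1 t) (g2 t) * k2 t = 0) \<and>
        (let h = (\<lambda>t. px (jac f1 f2) (g1 t) (g2 t) * k1 t + py (jac f1 f2) (g1 t) (g2 t) * k2 t)
         in h 0 = 0 \<and> deriv h 0 \<noteq> 0))"

end

theory Submission
  imports Defs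
begin

text \<open>In the normal form of the hypotheses the kernel of Df(0) is the x-axis, so the
vectors v1 and v2 both lie on the first axis: v2 = (a b, 0) with a = f1_y(0), b = J_y(0),
and, because J(t, \<phi> t) = 0 forces \<phi>'(0) = 0 and b \<phi>''(0) = -J_xx(0),
v1 = (f1_xx(0) - a J_xx(0)/b, 0).  A direct computation gives
det DF(0) = (a J_xx(0) - b f1_xx(0)) a r^2 with r = f2_xy(0) \<noteq> 0, and the cusp condition
(simple zero of dJ(\<xi>) along S_1(f)) is exactly a J_xx(0) - b f1_xx(0) \<noteq> 0.  Comparing
signs, the first components of v1 and v2 have product -(a J_xx(0) - b f1_xx(0)) a, which
has the opposite sign of det DF(0).\<close>

definition has_deriv2 :: "(real \<Rightarrow> real \<Rightarrow> real) \<Rightarrow> real \<Rightarrow> real \<Rightarrow> real \<Rightarrow> real \<Rightarrow> bool" where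
  "has_deriv2 g x y A B \<longleftrightarrow>
     ((\<lambda>p. g (fst p) (snd p)) has_derivative (\<lambda>h. A * fst h + B * snd h)) (at (x, y))"

lemma has_deriv2_chain:
  assumes "has_deriv2 g (u t) (v t) A B"
    and "(u has_real_derivative du) (at t)" and "(v has_real_derivative dv) (at t)"
  shows "((\<lambda>s. g (u s) (v s)) has_real_derivative A * du + B * dv) (at t)"
proof -
  have "((\<lambda>s. (u s, v s)) has_derivative (\<lambda>h. (du * h, dv * h))) (at t)"
    using assms(2,3) unfolding has_field_derivative_def by (rule has_derivative_Pair)
  from diff_chain_at[OF this assms(1)[unfolded has_deriv2_def]]
  have "((\<lambda>s. g (u s) (v s)) has_derivative (\<lambda>h. A * (du * h) + B * (dv * h))) (at t)"
    by (simp add: o_def)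
  then show ?thesis unfolding has_field_derivative_def
    by (rule has_derivative_eq_rhs) (simp add: fun_eq_iff algebra_simps)
qed

lemma has_deriv2_px: "has_deriv2 g x y A B \<Longrightarrow> px g x y = A"
  unfolding px_def using has_deriv2_chain[of g "\<lambda>s. s" x "\<lambda>_. y" A B 1 0]
  by (simp add: DERIV_imp_deriv)

lemma has_deriv2_py: "has_deriv2 g x y A B \<Longrightarrow> py g x y = B"
  unfolding py_def using has_deriv2_chain[of g "\<lambda>_. x" y "\<lambda>s. s" A B 0 1]
  by (simp add: DERIV_imp_deriv)

lemma has_deriv2_add:
  "has_deriv2 g x y A B \<Longrightarrow> has_deriv2 h x y C E \<Longrightarrow>
     has_deriv2 (\<lambda>x y. g x y + h x y) x y (A + C) (B + E)"
  unfolding has_deriv2_def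
  by (rule has_derivative_eq_rhs[OF has_derivative_add]) (auto simp: fun_eq_iff algebra_simps)

lemma has_deriv2_neg:
  "has_deriv2 g x y A B \<Longrightarrow> has_deriv2 (\<lambda>x y. - g x y) x y (- A) (- B)"
  unfolding has_deriv2_def
  by (rule has_derivative_eq_rhs[OF has_derivative_minus]) (auto simp: fun_eq_iff)

lemma has_deriv2_mult:
  "has_deriv2 g x y A B \<Longrightarrow> has_deriv2 h x y C E \<Longrightarrow>
     has_deriv2 (\<lambda>x y. g x y * h x y) x y (A * h x y + g x y * C) (B * h x y + g x y * E)"
  unfolding has_deriv2_def
  by (rule has_derivative_eq_rhs[OF has_derivative_mult]) (auto simp: fun_eq_iff algebra_simps)

lemma smooth2_has_deriv2: "smooth2 g \<Longrightarrow> has_deriv2 g x y (px g x y) (py g x y)"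
  by (erule smooth2.cases) (auto simp: has_deriv2_def)

lemma smooth2_px: "smooth2 g \<Longrightarrow> smooth2 (px g)"
  by (erule smooth2.cases) auto

lemma smooth2_py: "smooth2 g \<Longrightarrow> smooth2 (py g)"
  by (erule smooth2.cases) auto

text \<open>Closure of smooth2 under the ring operations is proved by coinduction up to this
closure: the partial derivative of a product is a sum of products, not a product.\<close>

inductive smooth2_ring_closure :: "(real \<Rightarrow> real \<Rightarrow> real) \<Rightarrow> bool" where
  base: "smooth2 g \<Longrightarrow> smooth2_ring_closure g"
| add: "smooth2_ring_closure g \<Longrightarrow> smooth2_ring_closure h \<Longrightarrow>
          smooth2_ring_closure (\<lambda>x y. g x y + h x y)"
| mult: "smooth2_ring_closure g \<Longrightarrow> smooth2_ring_closure h \<Longrightarrow>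
          smooth2_ring_closure (\<lambda>x y. g x y * h x y)"
| neg: "smooth2_ring_closure g \<Longrightarrow> smooth2_ring_closure (\<lambda>x y. - g x y)"

lemma has_deriv2_everywhere_partials:
  assumes "\<And>x y. has_deriv2 g x y (A x y) (B x y)"
  shows "px g = A" "py g = B"
  using has_deriv2_px[OF assms] has_deriv2_py[OF assms] by (auto simp: fun_eq_iff)

lemma smooth2_ring_closure_unfold:
  "smooth2_ring_closure g \<Longrightarrow>
     (\<forall>x y. has_deriv2 g x y (px g x y) (py g x y)) \<and>
     smooth2_ring_closure (px g) \<and> smooth2_ring_closure (py g)"
proof (induction rule: smooth2_ring_closure.induct)
  case (base g)
  then show ?case
    by (auto intro: smooth2_ring_closure.base smooth2_has_deriv2 smooth2_px smooth2_py)
next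
  case (add g h)
  have D: "has_deriv2 (\<lambda>x y. g x y + h x y) x y (px g x y + px h x y) (py g x y + py h x y)"
    for x y using add.IH by (auto intro: has_deriv2_add)
  with add.IH show ?case
    unfolding has_deriv2_everywhere_partials[OF D] by (auto intro: smooth2_ring_closure.add)
next
  case (neg g)
  have D: "has_deriv2 (\<lambda>x y. - g x y) x y (- px g x y) (- py g x y)" for x y
    using neg.IH by (auto intro: has_deriv2_neg)
  with neg.IH show ?case
    unfolding has_deriv2_everywhere_partials[OF D] by (auto intro: smooth2_ring_closure.neg)
next
  case (mult g h)
  have D: "has_deriv2 (\<lambda>x y. g x y * h x y) x y (px g x y * h x y + g x y * px h x y)
             (py g x y * h x y + g x y * py h x y)" for x y
    using mult.IH by (auto intro: has_deriv2_mult)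
  with mult show ?case
    unfolding has_deriv2_everywhere_partials[OF D]
    by (auto intro!: smooth2_ring_closure.add smooth2_ring_closure.mult)
qed

lemma smooth2_ring_closure_smooth2: "smooth2_ring_closure g \<Longrightarrow> smooth2 g"
proof (coinduction arbitrary: g rule: smooth2.coinduct)
  case (smooth2 g)
  then show ?case
    using smooth2_ring_closure_unfold[OF smooth2] by (auto simp: has_deriv2_def)
qed

lemma smooth2_add: "smooth2 g \<Longrightarrow> smooth2 h \<Longrightarrow> smooth2 (\<lambda>x y. g x y + h x y)"
  by (rule smooth2_ring_closure_smooth2, rule smooth2_ring_closure.add; rule smooth2_ring_closure.base)

lemma smooth2_mult: "smooth2 g \<Longrightarrow> smooth2 h \<Longrightarrow> smooth2 (\<lambda>x y. g x y * h x y)"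
  by (rule smooth2_ring_closure_smooth2, rule smooth2_ring_closure.mult; rule smooth2_ring_closure.base)

lemma smooth2_neg: "smooth2 g \<Longrightarrow> smooth2 (\<lambda>x y. - g x y)"
  by (rule smooth2_ring_closure_smooth2, rule smooth2_ring_closure.neg, rule smooth2_ring_closure.base)

lemma smooth2_diff: "smooth2 g \<Longrightarrow> smooth2 h \<Longrightarrow> smooth2 (\<lambda>x y. g x y - h x y)"
  using smooth2_add[OF _ smooth2_neg] by simp

lemma px_add: "smooth2 g \<Longrightarrow> smooth2 h \<Longrightarrow> px (\<lambda>x y. g x y + h x y) x y = px g x y + px h x y"
  by (rule has_deriv2_px[OF has_deriv2_add[OF smooth2_has_deriv2 smooth2_has_deriv2]])

lemma py_add: "smooth2 g \<Longrightarrow> smooth2 h \<Longrightarrow> py (\<lambda>x y. g x y + h x y) x y = py g x y + py h x y"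
  by (rule has_deriv2_py[OF has_deriv2_add[OF smooth2_has_deriv2 smooth2_has_deriv2]])

lemma px_neg: "smooth2 g \<Longrightarrow> px (\<lambda>x y. - g x y) x y = - px g x y"
  by (rule has_deriv2_px[OF has_deriv2_neg[OF smooth2_has_deriv2]])

lemma py_neg: "smooth2 g \<Longrightarrow> py (\<lambda>x y. - g x y) x y = - py g x y"
  by (rule has_deriv2_py[OF has_deriv2_neg[OF smooth2_has_deriv2]])

lemma px_diff: "smooth2 g \<Longrightarrow> smooth2 h \<Longrightarrow> px (\<lambda>x y. g x y - h x y) x y = px g x y - px h x y"
  using px_add[OF _ smooth2_neg] px_neg by simp

lemma py_diff: "smooth2 g \<Longrightarrow> smooth2 h \<Longrightarrow> py (\<lambda>x y. g x y - h x y) x y = py g x y - py h x y"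
  using py_add[OF _ smooth2_neg] py_neg by simp

lemma px_mult:
  "smooth2 g \<Longrightarrow> smooth2 h \<Longrightarrow>
     px (\<lambda>x y. g x y * h x y) x y = px g x y * h x y + g x y * px h x y"
  by (rule has_deriv2_px[OF has_deriv2_mult[OF smooth2_has_deriv2 smooth2_has_deriv2]])

lemma py_mult:
  "smooth2 g \<Longrightarrow> smooth2 h \<Longrightarrow>
     py (\<lambda>x y. g x y * h x y) x y = py g x y * h x y + g x y * py h x y"
  by (rule has_deriv2_py[OF has_deriv2_mult[OF smooth2_has_deriv2 smooth2_has_deriv2]])

lemma jac_eq: "jac f1 f2 = (\<lambda>x y. px f1 x y * py f2 x y - py f1 x y * px f2 x y)"
  by (simp add: fun_eq_iff jac_def)

lemma smooth2_jac: "smooth2 f1 \<Longrightarrow> smooth2 f2 \<Longrightarrow> smooth2 (jac f1 f2)"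
  unfolding jac_eq by (intro smooth2_diff smooth2_mult smooth2_px smooth2_py)

lemma px_jac:
  assumes "smooth2 f1" "smooth2 f2"
  shows "px (jac f1 f2) x y =
    px (px f1) x y * py f2 x y + px f1 x y * px (py f2) x y
      - (px (py f1) x y * px f2 x y + py f1 x y * px (px f2) x y)"
  unfolding jac_eq using assms by (simp add: px_diff px_mult smooth2_mult smooth2_px smooth2_py)

lemma py_jac:
  assumes "smooth2 f1" "smooth2 f2"
  shows "py (jac f1 f2) x y =
    py (px f1) x y * py f2 x y + px f1 x y * py (py f2) x y
      - (py (py f1) x y * px f2 x y + py f1 x y * py (px f2) x y)"
  unfolding jac_eq using assms by (simp add: py_diff py_mult smooth2_mult smooth2_px smooth2_py)

lemma smooth2_chain:
  "smooth2 g \<Longrightarrow> (u has_real_derivative du) (at t) \<Longrightarrow> (v has_real_derivative dv) (at t) \<Longrightarrow>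
     ((\<lambda>s. g (u s) (v s)) has_real_derivative px g (u t) (v t) * du + py g (u t) (v t) * dv) (at t)"
  by (rule has_deriv2_chain[OF smooth2_has_deriv2])

lemma has_real_derivative_pairing_along_curve:
  assumes "smooth2 F" "smooth2 G"
    and "(u has_real_derivative du) (at t)" "(v has_real_derivative dv) (at t)"
    and "(k has_real_derivative dk) (at t)" "(l has_real_derivative dl) (at t)"
  shows "((\<lambda>s. F (u s) (v s) * k s + G (u s) (v s) * l s) has_real_derivative
     (px F (u t) (v t) * du + py F (u t) (v t) * dv) * k t + dk * F (u t) (v t) +
     ((px G (u t) (v t) * du + py G (u t) (v t) * dv) * l t + dl * G (u t) (v t))) (at t)"
  using DERIV_add[OF DERIV_mult[OF smooth2_chain[OF assms(1,3,4)] assms(5)]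
                     DERIV_mult[OF smooth2_chain[OF assms(2,3,4)] assms(6)]] .

lemma smooth1_on_has_real_derivative:
  "smooth1_on S g \<Longrightarrow> t \<in> S \<Longrightarrow> (g has_real_derivative deriv g t) (at t)"
  by (erule smooth1_on.cases) auto

lemma smooth1_on_deriv: "smooth1_on S g \<Longrightarrow> smooth1_on S (deriv g)"
  by (erule smooth1_on.cases) auto

lemma deriv_eq_0_on_open: "open S \<Longrightarrow> t \<in> S \<Longrightarrow> \<forall>s\<in>S. f s = 0 \<Longrightarrow> deriv f t = 0"
proof -
  assume "open S" "t \<in> S" "\<forall>s\<in>S. f s = 0"
  then have "eventually (\<lambda>s. f s = 0) (nhds t)"
    using eventually_nhds by blast
  then show "deriv f t = 0"
    by (simp add: deriv_cong_ev[of f "\<lambda>_. 0" t t])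
qed

lemma deriv_along_graph:
  "smooth2 f \<Longrightarrow> smooth1_on S \<phi> \<Longrightarrow> t \<in> S \<Longrightarrow>
     deriv (\<lambda>s. f s (\<phi> s)) t = px f t (\<phi> t) + py f t (\<phi> t) * deriv \<phi> t"
  using smooth2_chain[OF _ DERIV_ident smooth1_on_has_real_derivative, of f S \<phi> t]
  by (simp add: DERIV_imp_deriv)

lemma deriv2_along_graph:
  assumes f: "smooth2 f" and \<phi>: "smooth1_on S \<phi>" and "open S" "t \<in> S"
  shows "deriv (deriv (\<lambda>s. f s (\<phi> s))) t =
    px (px f) t (\<phi> t) + (py (px f) t (\<phi> t) + px (py f) t (\<phi> t)) * deriv \<phi> t
      + py (py f) t (\<phi> t) * (deriv \<phi> t)\<^sup>2 + py f t (\<phi> t) * deriv (deriv \<phi>) t"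
proof -
  note \<phi>' = smooth1_on_has_real_derivative[OF \<phi> \<open>t \<in> S\<close>]
    and \<phi>'' = smooth1_on_has_real_derivative[OF smooth1_on_deriv[OF \<phi>] \<open>t \<in> S\<close>]
  have "((\<lambda>s. px f s (\<phi> s) + py f s (\<phi> s) * deriv \<phi> s) has_real_derivative
      (px (px f) t (\<phi> t) * 1 + py (px f) t (\<phi> t) * deriv \<phi> t) +
      ((px (py f) t (\<phi> t) * 1 + py (py f) t (\<phi> t) * deriv \<phi> t) * deriv \<phi> t
        + deriv (deriv \<phi>) t * py f t (\<phi> t))) (at t)"
    by (intro DERIV_add DERIV_mult smooth2_chain smooth2_px smooth2_py f DERIV_ident \<phi>' \<phi>'')
  then have "(deriv (\<lambda>s. f s (\<phi> s)) has_real_derivative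
      (px (px f) t (\<phi> t) * 1 + py (px f) t (\<phi> t) * deriv \<phi> t) +
      ((px (py f) t (\<phi> t) * 1 + py (py f) t (\<phi> t) * deriv \<phi> t) * deriv \<phi> t
        + deriv (deriv \<phi>) t * py f t (\<phi> t))) (at t)"
    by (rule has_field_derivative_transform_within_open[OF _ \<open>open S\<close> \<open>t \<in> S\<close>])
      (simp add: deriv_along_graph[OF f \<phi>])
  then show ?thesis
    by (simp add: DERIV_imp_deriv power2_eq_square algebra_simps)
qed

lemma deriv_zero_along_graph:
  assumes "smooth2 g" "smooth1_on S \<phi>" "open S" "t \<in> S" "\<forall>s\<in>S. g s (\<phi> s) = 0"
  shows "px g t (\<phi> t) + py g t (\<phi> t) * deriv \<phi> t = 0"
  using deriv_along_graph[OF assms(1,2,4)] deriv_eq_0_on_open[OF assms(3,4,5)] by simp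

lemma deriv2_zero_along_graph:
  assumes "smooth2 g" "smooth1_on S \<phi>" "open S" "t \<in> S" "\<forall>s\<in>S. g s (\<phi> s) = 0"
  shows "px (px g) t (\<phi> t) + (py (px g) t (\<phi> t) + px (py g) t (\<phi> t)) * deriv \<phi> t
      + py (py g) t (\<phi> t) * (deriv \<phi> t)\<^sup>2 + py g t (\<phi> t) * deriv (deriv \<phi>) t = 0"
proof -
  have "\<forall>s\<in>S. deriv (\<lambda>s. g s (\<phi> s)) s = 0"
    using deriv_eq_0_on_open[OF assms(3) _ assms(5)] by blast
  then show ?thesis
    using deriv2_along_graph[OF assms(1-4)] deriv_eq_0_on_open[OF assms(3,4)] by simp
qed

text \<open>Along the curve \<gamma> = (g1, g2) of the cusp condition, \<gamma>'(0) and \<xi>(0) = (k1 0, k2 0)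
both lie on the x-axis.  Differentiating the identity f1_x k1 + f1_y k2 = 0 at 0 expresses
k2'(0) through f1_xx(0); substituted into the derivative of dJ(\<xi>), which must be nonzero,
this leaves the factor below.\<close>

lemma cusp_point_second_order:
  assumes f1: "smooth2 f1" and f2: "smooth2 f2" and "cusp_point f1 f2 a b"
    and f1x: "px f1 a b = 0" and f1y: "py f1 a b \<noteq> 0" and Jx: "px (jac f1 f2) a b = 0"
  shows "py f1 a b * px (px (jac f1 f2)) a b - py (jac f1 f2) a b * px (px f1) a b \<noteq> 0"
proof -
  obtain e g1 g2 k1 k2 where "e > 0"
    and smooth: "smooth1_on (ball 0 e) g1" "smooth1_on (ball 0 e) g2"
      "smooth1_on (ball 0 e) k1" "smooth1_on (ball 0 e) k2"
    and \<gamma>0: "g1 0 = a" "g2 0 = b" and regular: "(deriv g1 0, deriv g2 0) \<noteq> (0, 0)"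
    and tangent: "px f1 a b * deriv g1 0 + py f1 a b * deriv g2 0 = 0"
    and kernel: "\<forall>t\<in>ball 0 e. (k1 t, k2 t) \<noteq> (0, 0) \<and>
           px f1 (g1 t) (g2 t) * k1 t + py f1 (g1 t) (g2 t) * k2 t = 0 \<and>
           px f2 (g1 t) (g2 t) * k1 t + py f2 (g1 t) (g2 t) * k2 t = 0"
    and simple_zero: "deriv (\<lambda>t. px (jac f1 f2) (g1 t) (g2 t) * k1 t
                                 + py (jac f1 f2) (g1 t) (g2 t) * k2 t) 0 \<noteq> 0"
    using assms(3) unfolding cusp_point_def Let_def by blast
  have ball: "open (ball 0 e)" "0 \<in> ball (0::real) e"
    using \<open>e > 0\<close> by auto
  note derivs = smooth[THEN smooth1_on_has_real_derivative, OF ball(2)]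
  have "deriv g2 0 = 0"
    using tangent f1x f1y by simp
  moreover have "k2 0 = 0"
    using kernel[rule_format, OF ball(2)] \<gamma>0 f1x f1y by simp
  ultimately have "deriv g1 0 \<noteq> 0" "k1 0 \<noteq> 0"
    using regular kernel[rule_format, OF ball(2)] by auto
  have "deriv (\<lambda>t. px f1 (g1 t) (g2 t) * k1 t + py f1 (g1 t) (g2 t) * k2 t) 0 = 0"
    using kernel by (intro deriv_eq_0_on_open[OF ball]) blast
  then have kernel_deriv: "px (px f1) a b * deriv g1 0 * k1 0 + py f1 a b * deriv k2 0 = 0"
    using DERIV_imp_deriv[OF has_real_derivative_pairing_along_curve[OF
          smooth2_px[OF f1] smooth2_py[OF f1] derivs]]
      \<gamma>0 \<open>deriv g2 0 = 0\<close> \<open>k2 0 = 0\<close> f1x by (simp add: mult.commute)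
  have "px (px (jac f1 f2)) a b * deriv g1 0 * k1 0 + py (jac f1 f2) a b * deriv k2 0 \<noteq> 0"
    using simple_zero DERIV_imp_deriv[OF has_real_derivative_pairing_along_curve[OF
          smooth2_px[OF smooth2_jac[OF f1 f2]] smooth2_py[OF smooth2_jac[OF f1 f2]] derivs]]
      \<gamma>0 \<open>deriv g2 0 = 0\<close> \<open>k2 0 = 0\<close> Jx by (simp add: mult.commute)
  moreover have "py f1 a b * (px (px (jac f1 f2)) a b * deriv g1 0 * k1 0
                              + py (jac f1 f2) a b * deriv k2 0)
      = (py f1 a b * px (px (jac f1 f2)) a b - py (jac f1 f2) a b * px (px f1) a b)
          * (deriv g1 0 * k1 0)
        + py (jac f1 f2) a b * (px (px f1) a b * deriv g1 0 * k1 0 + py f1 a b * deriv k2 0)"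
    by (simp add: algebra_simps)
  ultimately show ?thesis
    using kernel_deriv f1y by auto
qed

lemma detDF_normal_form:
  assumes f1: "smooth2 f1" and f2: "smooth2 f2"
    and f1x: "px f1 x y = 0" and f2x: "px f2 x y = 0" and f2y: "py f2 x y = 0"
    and f2xx: "px (px f2) x y = 0" and Jx: "px (jac f1 f2) x y = 0"
  shows "detDF f1 f2 x y =
    (py f1 x y * px (px (jac f1 f2)) x y - py (jac f1 f2) x y * px (px f1) x y)
      * (- py (px f2) x y * py (jac f1 f2) x y)"
proof -
  note J = smooth2_jac[OF f1 f2]
  have F1: "bigF1 f1 f2 = (\<lambda>x y. px f1 x y * - py (jac f1 f2) x y + py f1 x y * px (jac f1 f2) x y)"
    and F2: "bigF2 f1 f2 = (\<lambda>x y. px f2 x y * - py (jac f1 f2) x y + py f2 x y * px (jac f1 f2) x y)"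
    by (simp_all add: fun_eq_iff bigF1_def bigF2_def)
  note rules = px_add py_add px_mult py_mult px_neg py_neg
    smooth2_mult smooth2_neg smooth2_px smooth2_py f1 f2 J
  have "px (bigF1 f1 f2) x y =
      py f1 x y * px (px (jac f1 f2)) x y - py (jac f1 f2) x y * px (px f1) x y"
    unfolding F1 by (simp only: rules) (simp add: f1x Jx)
  moreover have "px (bigF2 f1 f2) x y = 0"
    unfolding F2 by (simp only: rules) (simp add: f2x f2y f2xx Jx)
  moreover have "py (bigF2 f1 f2) x y = - py (px f2) x y * py (jac f1 f2) x y"
    unfolding F2 by (simp only: rules) (simp add: f2x f2y Jx)
  ultimately show ?thesis
    unfolding detDF_def by simp
qed

lemma direction_on_first_axis:
  fixes x y :: real
  assumes "y \<noteq> 0"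
  shows "(\<exists>c>0. (x, 0) = c *\<^sub>R (y, 0::real)) \<longleftrightarrow> 0 < x * y"
    and "(\<exists>c<0. (x, 0) = c *\<^sub>R (y, 0::real)) \<longleftrightarrow> x * y < 0"
proof -
  have scaled_iff: "(x, 0) = c *\<^sub>R (y, 0::real) \<longleftrightarrow> c = x / y" for c
    using assms by (auto simp: field_simps)
  show "(\<exists>c>0. (x, 0) = c *\<^sub>R (y, 0::real)) \<longleftrightarrow> 0 < x * y"
    unfolding scaled_iff by (simp add: zero_less_divide_iff zero_less_mult_iff)
  show "(\<exists>c<0. (x, 0) = c *\<^sub>R (y, 0::real)) \<longleftrightarrow> x * y < 0"
    unfolding scaled_iff by (simp add: divide_less_0_iff mult_less_0_iff)
qed

lemma first_axis_direction_by_sign: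
  fixes x y k d s :: real
  assumes "y \<noteq> 0" "k \<noteq> 0" "x * y = - k" "d = k * s" "0 < s"
  shows "d \<noteq> 0 \<and> (x, 0) \<noteq> (0 :: real \<times> real) \<and> (y, 0) \<noteq> (0 :: real \<times> real) \<and>
    ((\<exists>c>0. (x, 0) = c *\<^sub>R (y, 0::real)) \<longleftrightarrow> d < 0) \<and>
    ((\<exists>c<0. (x, 0) = c *\<^sub>R (y, 0::real)) \<longleftrightarrow> 0 < d)"
proof -
  have "x \<noteq> 0"
    using assms(2,3) by auto
  moreover have "d < 0 \<longleftrightarrow> 0 < x * y" "0 < d \<longleftrightarrow> x * y < 0"
    using assms(3-5) by (simp_all add: mult_less_0_iff zero_less_mult_iff)
  ultimately show ?thesis
    using direction_on_first_axis[OF assms(1)] assms(1,2,4,5) by (simp add: zero_prod_def)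
qed

theorem mainTheorem14:
  fixes f1 f2 :: "real \<Rightarrow> real \<Rightarrow> real" and \<phi> :: "real \<Rightarrow> real" and e :: real
  assumes "smooth2 f1" and "smooth2 f2"
    and "one_generic f1 f2"
    and "cusp_point f1 f2 0 0"
    and "f1 0 0 = 0" and "f2 0 0 = 0"
    and "px f1 0 0 = 0" and "px f2 0 0 = 0" and "py f2 0 0 = 0"
    and "py f1 0 0 \<noteq> 0"
    and "px (jac f1 f2) 0 0 = 0" and "py (jac f1 f2) 0 0 \<noteq> 0"
    and "e > 0" and "smooth1_on (ball 0 e) \<phi>" and "\<phi> 0 = 0"
    and "\<forall>t\<in>ball 0 e. jac f1 f2 t (\<phi> t) = 0"
  shows "detDF f1 f2 0 0 \<noteq> 0 \<and>
    (let v1 = (deriv (deriv (\<lambda>t. f1 t (\<phi> t))) 0, deriv (deriv (\<lambda>t. f2 t (\<phi> t))) 0);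
         v2 = (px f1 0 0 * px (jac f1 f2) 0 0 + py f1 0 0 * py (jac f1 f2) 0 0,
               px f2 0 0 * px (jac f1 f2) 0 0 + py f2 0 0 * py (jac f1 f2) 0 0)
     in v1 \<noteq> 0 \<and> v2 \<noteq> 0 \<and>
        ((\<exists>c>0. v1 = c *\<^sub>R v2) \<longleftrightarrow> detDF f1 f2 0 0 < 0) \<and>
        ((\<exists>c<0. v1 = c *\<^sub>R v2) \<longleftrightarrow> detDF f1 f2 0 0 > 0))"
proof -
  note J = smooth2_jac[OF assms(1,2)]
  have ball: "open (ball 0 e)" "0 \<in> ball (0::real) e"
    using \<open>e > 0\<close> by auto
  have f2xx: "px (px f2) 0 0 = 0" and Jy: "py (jac f1 f2) 0 0 = - py f1 0 0 * py (px f2) 0 0"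
    using px_jac[OF assms(1,2), of 0 0] py_jac[OF assms(1,2), of 0 0] assms(7-11) by simp_all
  have \<phi>': "deriv \<phi> 0 = 0"
    using deriv_zero_along_graph[OF J assms(14) ball assms(16)] assms(11,12,15) by simp
  have \<phi>'': "px (px (jac f1 f2)) 0 0 + py (jac f1 f2) 0 0 * deriv (deriv \<phi>) 0 = 0"
    using deriv2_zero_along_graph[OF J assms(14) ball assms(16)] \<phi>' assms(15) by simp
  have v1: "deriv (deriv (\<lambda>t. f1 t (\<phi> t))) 0 = px (px f1) 0 0 + py f1 0 0 * deriv (deriv \<phi>) 0"
    "deriv (deriv (\<lambda>t. f2 t (\<phi> t))) 0 = 0"
    using deriv2_along_graph[OF assms(1,14) ball] deriv2_along_graph[OF assms(2,14) ball]
      \<phi>' assms(9,15) f2xx by simp_all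
  define D where "D = py f1 0 0 * px (px (jac f1 f2)) 0 0 - py (jac f1 f2) 0 0 * px (px f1) 0 0"
  have "D \<noteq> 0"
    unfolding D_def by (rule cusp_point_second_order[OF assms(1,2,4,7,10,11)])
  have det: "detDF f1 f2 0 0 = (D * py f1 0 0) * (py (px f2) 0 0)\<^sup>2"
    using detDF_normal_form[OF assms(1,2,7-9) f2xx assms(11)]
    unfolding D_def Jy by (simp add: power2_eq_square algebra_simps)
  have v1_v2: "(px (px f1) 0 0 + py f1 0 0 * deriv (deriv \<phi>) 0) * (py f1 0 0 * py (jac f1 f2) 0 0)
      = - (D * py f1 0 0)"
    using \<phi>'' unfolding D_def by algebra
  have v2: "(px f1 0 0 * px (jac f1 f2) 0 0 + py f1 0 0 * py (jac f1 f2) 0 0,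
      px f2 0 0 * px (jac f1 f2) 0 0 + py f2 0 0 * py (jac f1 f2) 0 0)
      = (py f1 0 0 * py (jac f1 f2) 0 0, 0)"
    using assms(7-9,11) by simp
  have "py (px f2) 0 0 \<noteq> 0"
    using Jy assms(12) by auto
  then show ?thesis
    unfolding Let_def v1 v2
    by (intro first_axis_direction_by_sign[OF _ _ v1_v2 det]) (use assms(10,12) \<open>D \<noteq> 0\<close> in simp_all)
qed

end
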